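(* Let $\lambda_0,\dots,\lambda_n\in\mathbb{C}$ with $\lambda_0\neq\lambda_1$, $a\neq b$ real, and suppose $E_{(\lambda_0,\dots,\lambda_n)}$, $E_{(\lambda_0,\lambda_2,\dots,\lambda_n)}$, $E_{(\lambda_1,\dots,\lambda_n)}$ and $E_{(\lambda_2,\dots,\lambda_n)}$ are extended Chebyshev systems for $\{a,b\}$. Then for each $k=0,\dots,n-1$ there is a constant $C_k\neq0$ such that $$p_{(\lambda_0,\lambda_2,\dots,\lambda_n),k}-p_{(\lambda_1,\lambda_2,\dots,\lambda_n),k}=C_k\,p_{(\lambda_0,\lambda_1,\lambda_2,\dots,\lambda_n),k+1},$$ and $$\lim_{x\to b}\frac{p_{(\lambda_0,\lambda_2,\dots,\lambda_n),k}(x)}{p_{(\lambda_1,\dots,\lambda_n),k}(x)}\neq1.$$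
   Context: $E_{(\mu_0,\dots,\mu_m)}$ denotes the space of all $f\in C^\infty(\mathbb{R},\mathbb{C})$ with $(\frac{d}{dx}-\mu_0)\cdots(\frac{d}{dx}-\mu_m)f=0$ (dimension $m+1$). A zero of order (exactly) $k$ at $a$ means $f(a)=\dots=f^{(k-1)}(a)=0$, $f^{(k)}(a)\neq0$. $E_{(\mu_0,\dots,\mu_m)}$ is an extended Chebyshev system for $A\subset\mathbb{R}$ if every nonzero element has at most $m$ zeros in $A$ counted with multiplicity. In that case, for $A=\{a,b\}$, $a\ne b$, the Bernstein basis $p_{(\mu_0,\dots,\mu_m),k}$, $k=0,\dots,m$, is the unique family in $E_{(\mu_0,\dots,\mu_m)}$ with $p_{(\mu_0,\dots,\mu_m),k}$ having a zero of order exactly $k$ at $a$ and exactly $m-k$ at $b$, and $p^{(k)}_{(\mu_0,\dots,\mu_m),k}(a)=1$. *)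

theory Defs
  imports "HOL-Analysis.Analysis"
begin

fun nderiv :: "nat \<Rightarrow> (real \<Rightarrow> complex) \<Rightarrow> real \<Rightarrow> complex" where
  "nderiv 0 f = f"
| "nderiv (Suc k) f = (\<lambda>x. vector_derivative (nderiv k f) (at x))"

definition smooth :: "(real \<Rightarrow> complex) \<Rightarrow> bool" where
  "smooth f \<longleftrightarrow> (\<forall>k x. nderiv k f differentiable (at x))"

fun diffop :: "complex list \<Rightarrow> (real \<Rightarrow> complex) \<Rightarrow> real \<Rightarrow> complex" where
  "diffop [] f = f"
| "diffop (\<mu> # \<mu>s) f =
     (\<lambda>x. vector_derivative (diffop \<mu>s f) (at x) - \<mu> * diffop \<mu>s f x)"

definition Espace :: "complex list \<Rightarrow> (real \<Rightarrow> complex) set" where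
  "Espace \<mu>s = {f. smooth f \<and> diffop \<mu>s f = (\<lambda>_. 0)}"

definition zero_of_order :: "(real \<Rightarrow> complex) \<Rightarrow> real \<Rightarrow> nat \<Rightarrow> bool" where
  "zero_of_order f a k \<longleftrightarrow> (\<forall>j<k. nderiv j f a = 0) \<and> nderiv k f a \<noteq> 0"

text \<open>f has at most m zeros in A counted with multiplicity: for every finite
  set S of points of A and every assignment of multiplicities k with f vanishing
  to order at least k(s) at s, the total multiplicity is at most m.\<close>
definition at_most_zeros :: "(real \<Rightarrow> complex) \<Rightarrow> real set \<Rightarrow> nat \<Rightarrow> bool" where
  "at_most_zeros f A m \<longleftrightarrow>
     (\<forall>S k. finite S \<longrightarrow> S \<subseteq> A \<longrightarrow> (\<forall>s\<in>S. \<forall>j<k s. nderiv j f s = 0)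
        \<longrightarrow> (\<Sum>s\<in>S. k s) \<le> m)"

text \<open>Extended Chebyshev system; m + 1 = length of the list (dimension).\<close>
definition ECT :: "complex list \<Rightarrow> real set \<Rightarrow> bool" where
  "ECT \<mu>s A \<longleftrightarrow>
     (\<forall>f\<in>Espace \<mu>s. f \<noteq> (\<lambda>_. 0) \<longrightarrow> at_most_zeros f A (length \<mu>s - 1))"

definition bernstein :: "complex list \<Rightarrow> real \<Rightarrow> real \<Rightarrow> nat \<Rightarrow> real \<Rightarrow> complex" where
  "bernstein \<mu>s a b k = (THE p. p \<in> Espace \<mu>s \<and> zero_of_order p a k
      \<and> zero_of_order p b (length \<mu>s - 1 - k) \<and> nderiv k p a = 1)"

end

(*
  Write ls = (l2, ..., ln), N = length ls, and let p0, p1 be the k-th Bernstein functions of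
  E(l0, ls) and E(l1, ls). Both spaces lie in E(l0, l1, ls), so d = p0 - p1 does too; d vanishes
  to order k + 1 at a (both k-th derivatives there are 1) and to order N - k at b. It is not
  zero: otherwise D - l0 and D - l1 would both annihilate (D - l2)...(D - ln) p0, so p0 would lie
  in E(ls), where its N zeros force p0 = 0. As k + 1 + (N - k) = N + 1 is the largest number of
  zeros the Chebyshev property allows in E(l0, l1, ls), both orders are exact. Normalising d at a
  therefore yields the Bernstein function of index k + 1, and by Taylor's theorem p0 / p1 tends
  at b to the quotient of the (N - k)-th derivatives at b, which differ because d has exact
  order N - k there.

  The Bernstein functions exist by counting dimensions: E(mus) contains length mus independent
  functions (invert D - mu by variation of constants), and the Chebyshev property makes the
  Hermite data at a and b injective, hence surjective, on their span.
*)

theory Submission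
  imports Defs "Jordan_Normal_Form.Determinant"
begin

section \<open>Smooth functions and the operators D - \<mu>\<close>

lemma nderiv_Suc_inner: "nderiv (Suc k) f = nderiv k (\<lambda>x. vector_derivative f (at x))"
  by (induction k) auto

lemma nderiv_zero: "nderiv k (\<lambda>_. 0) = (\<lambda>_. 0)"
  by (induction k) auto

lemma smooth_vector_derivative: "smooth f \<Longrightarrow> smooth (\<lambda>x. vector_derivative f (at x))"
  unfolding smooth_def by (metis nderiv_Suc_inner)

lemma smooth_has_vector_derivative:
  "smooth f \<Longrightarrow> (nderiv k f has_vector_derivative nderiv (Suc k) f x) (at x)"
  unfolding smooth_def by (simp add: vector_derivative_works[symmetric])

lemma smooth_continuous_on: "smooth f \<Longrightarrow> continuous_on UNIV (nderiv k f)"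
  by (meson continuous_on_vector_derivative smooth_has_vector_derivative has_vector_derivative_at_within)

lemma
  assumes "F 0 = f" and "\<And>k x. (F k has_vector_derivative F (Suc k) x) (at x)"
  shows nderiv_tower: "nderiv k f = F k"
    and smooth_tower: "smooth f"
proof -
  show nderiv_eq: "nderiv k f = F k" for k
  proof (induction k)
    case (Suc k)
    then show ?case by (simp add: vector_derivative_at[OF assms(2)])
  qed (simp add: assms(1))
  show "smooth f"
    unfolding smooth_def nderiv_eq using assms(2) differentiableI_vector by blast
qed

lemma
  assumes "smooth f" "smooth g"
  shows smooth_diff: "smooth (\<lambda>x. f x - g x)"
    and nderiv_diff: "nderiv k (\<lambda>x. f x - g x) = (\<lambda>x. nderiv k f x - nderiv k g x)"
proof -
  let ?F = "\<lambda>k x. nderiv k f x - nderiv k g x"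
  have F: "(?F k has_vector_derivative ?F (Suc k) x) (at x)" for k x
    by (intro has_vector_derivative_diff smooth_has_vector_derivative assms)
  show "smooth (\<lambda>x. f x - g x)"
    by (rule smooth_tower[where F = ?F, OF _ F]) simp
  show "nderiv k (\<lambda>x. f x - g x) = ?F k"
    by (rule nderiv_tower[where F = ?F, OF _ F]) simp
qed

lemma
  assumes "smooth f"
  shows smooth_cmult: "smooth (\<lambda>x. c * f x)"
    and nderiv_cmult: "nderiv k (\<lambda>x. c * f x) = (\<lambda>x. c * nderiv k f x)"
proof -
  let ?F = "\<lambda>k x. c * nderiv k f x"
  have F: "(?F k has_vector_derivative ?F (Suc k) x) (at x)" for k x
    by (intro has_vector_derivative_mult_right smooth_has_vector_derivative assms)
  show "smooth (\<lambda>x. c * f x)"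
    by (rule smooth_tower[where F = ?F, OF _ F]) simp
  show "nderiv k (\<lambda>x. c * f x) = ?F k"
    by (rule nderiv_tower[where F = ?F, OF _ F]) simp
qed

lemma
  assumes "\<forall>i\<in>I. smooth (f i)"
  shows smooth_sum: "smooth (\<lambda>x. \<Sum>i\<in>I. c i * f i x)"
    and nderiv_sum: "nderiv k (\<lambda>x. \<Sum>i\<in>I. c i * f i x) = (\<lambda>x. \<Sum>i\<in>I. c i * nderiv k (f i) x)"
proof -
  let ?F = "\<lambda>k x. \<Sum>i\<in>I. c i * nderiv k (f i) x"
  have F: "(?F k has_vector_derivative ?F (Suc k) x) (at x)" for k x
    using assms by (intro has_vector_derivative_sum has_vector_derivative_mult_right
        smooth_has_vector_derivative) blast
  show "smooth (\<lambda>x. \<Sum>i\<in>I. c i * f i x)"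
    by (rule smooth_tower[where F = ?F, OF _ F]) simp
  show "nderiv k (\<lambda>x. \<Sum>i\<in>I. c i * f i x) = ?F k"
    by (rule nderiv_tower[where F = ?F, OF _ F]) simp
qed

lemma diffop_append: "diffop (\<mu>s @ \<nu>s) f = diffop \<mu>s (diffop \<nu>s f)"
  by (induction \<mu>s) auto

lemma diffop_zero: "diffop \<mu>s (\<lambda>_. 0) = (\<lambda>_. 0)"
  by (induction \<mu>s) auto

lemma smooth_diffop: "smooth f \<Longrightarrow> smooth (diffop \<mu>s f)"
  by (induction \<mu>s) (auto intro: smooth_diff smooth_vector_derivative smooth_cmult)

lemma diffop_diff:
  assumes "smooth f" "smooth g"
  shows "diffop \<mu>s (\<lambda>x. f x - g x) = (\<lambda>x. diffop \<mu>s f x - diffop \<mu>s g x)"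
proof (induction \<mu>s)
  case (Cons \<mu> \<mu>s)
  from nderiv_diff[OF smooth_diffop[OF assms(1), of \<mu>s] smooth_diffop[OF assms(2), of \<mu>s], of 1]
  show ?case by (simp add: Cons fun_eq_iff algebra_simps)
qed simp

lemma diffop_cmult:
  assumes "smooth f"
  shows "diffop \<mu>s (\<lambda>x. c * f x) = (\<lambda>x. c * diffop \<mu>s f x)"
proof (induction \<mu>s)
  case (Cons \<mu> \<mu>s)
  from nderiv_cmult[OF smooth_diffop[OF assms], where k = 1 and c = c]
  show ?case by (simp add: Cons fun_eq_iff algebra_simps)
qed simp

lemma diffop_sum:
  assumes "\<forall>i\<in>I. smooth (f i)"
  shows "diffop \<mu>s (\<lambda>x. \<Sum>i\<in>I. c i * f i x) = (\<lambda>x. \<Sum>i\<in>I. c i * diffop \<mu>s (f i) x)"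
proof (induction \<mu>s)
  case (Cons \<mu> \<mu>s)
  have "\<forall>i\<in>I. smooth (diffop \<mu>s (f i))"
    using assms by (simp add: smooth_diffop)
  from nderiv_sum[OF this, where k = 1 and c = c]
  show ?case
    by (simp add: Cons fun_eq_iff algebra_simps sum_subtractf sum_distrib_left)
qed simp

lemma diffop_swap:
  assumes "smooth f"
  shows "diffop (\<mu> # \<nu> # \<mu>s) f = diffop (\<nu> # \<mu> # \<mu>s) f"
proof -
  define g where "g = diffop \<mu>s f"
  have g: "smooth g" using assms by (simp add: g_def smooth_diffop)
  have "diffop [\<mu>, \<nu>] g = (\<lambda>x. nderiv 2 g x - (\<mu> + \<nu>) * nderiv 1 g x + \<mu> * \<nu> * g x)"
    for \<mu> \<nu>
    using nderiv_diff[OF smooth_vector_derivative[OF g] smooth_cmult[OF g, where c = \<nu>], where k = 1]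
      nderiv_cmult[OF g, where k = 1 and c = \<nu>]
    by (simp add: fun_eq_iff algebra_simps numeral_2_eq_2)
  then show ?thesis
    using diffop_append[of "[_, _]" \<mu>s f] by (simp only: g_def append_Cons append_Nil) (simp add: ac_simps)
qed

lemma Espace_diff: "f \<in> Espace \<mu>s \<Longrightarrow> g \<in> Espace \<mu>s \<Longrightarrow> (\<lambda>x. f x - g x) \<in> Espace \<mu>s"
  by (auto simp: Espace_def diffop_diff smooth_diff)

lemma Espace_cmult: "f \<in> Espace \<mu>s \<Longrightarrow> (\<lambda>x. c * f x) \<in> Espace \<mu>s"
  by (auto simp: Espace_def diffop_cmult smooth_cmult)

lemma Espace_sum:
  "\<forall>i\<in>I. f i \<in> Espace \<mu>s \<Longrightarrow> (\<lambda>x. \<Sum>i\<in>I. c i * f i x) \<in> Espace \<mu>s"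
  by (auto simp: Espace_def diffop_sum smooth_sum)

lemma Espace_subset_Cons: "Espace \<mu>s \<subseteq> Espace (\<mu> # \<mu>s)"
  by (auto simp: Espace_def)

lemma Espace_swap: "Espace (\<mu> # \<nu> # \<mu>s) = Espace (\<nu> # \<mu> # \<mu>s)"
  by (auto simp: Espace_def diffop_swap simp del: diffop.simps)

lemma Espace_Cons_Int:
  assumes "\<mu> \<noteq> \<nu>"
  shows "Espace (\<mu> # \<mu>s) \<inter> Espace (\<nu> # \<mu>s) = Espace \<mu>s"
proof (intro equalityI subsetI)
  fix f assume f: "f \<in> Espace (\<mu> # \<mu>s) \<inter> Espace (\<nu> # \<mu>s)"
  have "(\<nu> - \<mu>) * diffop \<mu>s f x = diffop (\<mu> # \<mu>s) f x - diffop (\<nu> # \<mu>s) f x" for x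
    by (simp add: algebra_simps)
  then have "diffop \<mu>s f x = 0" for x
    using f assms by (simp add: Espace_def del: diffop.simps)
  then show "f \<in> Espace \<mu>s" using f by (simp add: Espace_def fun_eq_iff)
qed (use Espace_subset_Cons in blast)+

section \<open>A basis of solutions\<close>

lemma has_antiderivative:
  fixes h :: "real \<Rightarrow> complex"
  assumes "continuous_on UNIV h"
  obtains H where "\<And>x. (H has_vector_derivative h x) (at x)"
proof
  fix x :: real
  have "((\<lambda>u. interval_lebesgue_integral lborel (ereal 0) (ereal u) h) has_vector_derivative h x)
          (at x within {min x 0 - 1..max x 0 + 1})"
    by (rule interval_integral_FTC2) (auto intro: continuous_on_subset[OF assms])
  then show "((\<lambda>u. interval_lebesgue_integral lborel (ereal 0) (ereal u) h)
               has_vector_derivative h x) (at x)"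
    by (simp add: at_within_Icc_at)
qed

lemma has_vector_derivative_exp_mult:
  fixes c :: complex
  shows "((\<lambda>x::real. exp (c * of_real x)) has_vector_derivative c * exp (c * of_real x)) (at x)"
proof -
  have "((\<lambda>z. exp (c * z)) has_field_derivative c * exp (c * of_real x)) (at (of_real x))"
    by (auto intro!: derivative_eq_intros)
  from has_vector_derivative_real_field[OF this] show ?thesis by simp
qed

lemma smooth_if_linear_ode:
  assumes g: "smooth g" and u: "\<And>x. (u has_vector_derivative \<mu> * u x + g x) (at x)"
  shows "smooth u"
proof -
  have "(nderiv k u has_vector_derivative \<mu> * nderiv k u x + nderiv k g x) (at x)" for k x
  proof (induction k arbitrary: x)
    case 0
    then show ?case using u by simp
  next
    case (Suc k)
    have "nderiv (Suc k) u = (\<lambda>x. \<mu> * nderiv k u x + nderiv k g x)"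
      using Suc by (simp add: vector_derivative_at fun_eq_iff)
    then show ?case
      by (simp only:) (intro has_vector_derivative_add has_vector_derivative_mult_right
          Suc smooth_has_vector_derivative g)
  qed
  then show ?thesis unfolding smooth_def using differentiableI_vector by blast
qed

lemma smooth_exp_mult: "smooth (\<lambda>x. exp (\<mu> * complex_of_real x))"
  by (rule smooth_if_linear_ode[where g = "\<lambda>_. 0" and \<mu> = \<mu>])
    (simp_all add: smooth_tower[where F = "\<lambda>_ _. 0"] has_vector_derivative_exp_mult)

lemma diffop_exp_mult: "diffop [\<mu>] (\<lambda>x. exp (\<mu> * complex_of_real x)) = (\<lambda>_. 0)"
  by (simp add: fun_eq_iff vector_derivative_at[OF has_vector_derivative_exp_mult])

lemma first_order_diffop_surj:
  assumes g: "smooth g"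
  shows "\<exists>u. smooth u \<and> diffop [\<mu>] u = g"
proof -
  have "continuous_on UNIV (\<lambda>x. exp (- \<mu> * of_real x) * g x)"
    using smooth_continuous_on[OF smooth_exp_mult[of "- \<mu>"], of 0] smooth_continuous_on[OF g, of 0]
    by (auto intro: continuous_on_mult)
  then obtain V where V: "\<And>x. (V has_vector_derivative exp (- \<mu> * of_real x) * g x) (at x)"
    by (rule has_antiderivative) blast
  define u where "u x = exp (\<mu> * of_real x) * V x" for x
  have u': "(u has_vector_derivative \<mu> * u x + g x) (at x)" for x
  proof -
    have "(u has_vector_derivative exp (\<mu> * of_real x) * (exp (- \<mu> * of_real x) * g x)
            + \<mu> * exp (\<mu> * of_real x) * V x) (at x)"
      unfolding u_def[abs_def] by (intro has_vector_derivative_mult has_vector_derivative_exp_mult V)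
    moreover have "exp (\<mu> * of_real x) * exp (- \<mu> * of_real x) = 1"
      by (simp add: mult_exp_exp)
    ultimately show ?thesis
      by (simp add: u_def algebra_simps)
  qed
  have "diffop [\<mu>] u = g"
    by (simp add: fun_eq_iff vector_derivative_at[OF u'])
  with smooth_if_linear_ode[OF g u'] show ?thesis by blast
qed

lemma diffop_surj: "smooth g \<Longrightarrow> \<exists>h. smooth h \<and> diffop \<mu>s h = g"
proof (induction \<mu>s arbitrary: g)
  case (Cons \<mu> \<mu>s)
  obtain u where u: "smooth u" "diffop [\<mu>] u = g"
    using first_order_diffop_surj[OF Cons.prems] by blast
  obtain h where "smooth h" "diffop \<mu>s h = u"
    using Cons.IH[OF u(1)] by blast
  with u show ?case
    using diffop_append[of "[\<mu>]" \<mu>s h] by auto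
qed auto

definition lin_indep :: "(real \<Rightarrow> complex) list \<Rightarrow> bool" where
  "lin_indep fs \<longleftrightarrow>
     (\<forall>c. (\<forall>x. (\<Sum>i<length fs. c i * (fs ! i) x) = 0) \<longrightarrow> (\<forall>i<length fs. c i = 0))"

lemma lin_indep_Cons:
  assumes fs: "lin_indep fs" "set fs \<subseteq> Espace \<mu>s" and h: "smooth h" "diffop \<mu>s h x0 \<noteq> 0"
  shows "lin_indep (h # fs)"
  unfolding lin_indep_def
proof (rule allI, rule impI)
  fix c
  assume z: "\<forall>x. (\<Sum>i<length (h # fs). c i * ((h # fs) ! i) x) = 0"
  have "set (h # fs) \<subseteq> {f. smooth f}"
    using fs(2) h(1) by (auto simp: Espace_def)
  then have "\<forall>i\<in>{..<length (h # fs)}. smooth ((h # fs) ! i)"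
    using nth_mem by blast
  then have "(\<lambda>x. \<Sum>i<length (h # fs). c i * diffop \<mu>s ((h # fs) ! i) x)
      = diffop \<mu>s (\<lambda>x. \<Sum>i<length (h # fs). c i * ((h # fs) ! i) x)"
    by (rule diffop_sum[symmetric])
  also have "\<dots> = (\<lambda>_. 0)"
    using z diffop_zero by simp
  finally have sum0: "(\<Sum>i<length (h # fs). c i * diffop \<mu>s ((h # fs) ! i) x0) = 0"
    by (rule fun_cong)
  have "diffop \<mu>s (fs ! i) = (\<lambda>_. 0)" if "i < length fs" for i
    using fs(2) nth_mem[OF that] by (auto simp: Espace_def simp del: diffop.simps)
  then have "(\<Sum>i<length fs. c (Suc i) * diffop \<mu>s (fs ! i) x0) = 0"
    by simp
  with sum0 h(2) have c0: "c 0 = 0"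
    by (simp add: sum.lessThan_Suc_shift del: sum.lessThan_Suc)
  with z have "\<forall>x. (\<Sum>i<length fs. c (Suc i) * (fs ! i) x) = 0"
    by (simp add: sum.lessThan_Suc_shift del: sum.lessThan_Suc)
  then have "\<forall>i<length fs. c (Suc i) = 0"
    using fs(1) unfolding lin_indep_def by (elim allE[where x = "\<lambda>i. c (Suc i)"]) simp
  with c0 show "\<forall>i<length (h # fs). c i = 0"
    by (auto simp: less_Suc_eq_0_disj)
qed

lemma Espace_lin_indep_list:
  "\<exists>fs. length fs = length \<mu>s \<and> set fs \<subseteq> Espace \<mu>s \<and> lin_indep fs"
proof (induction \<mu>s)
  case Nil
  show ?case by (simp add: lin_indep_def)
next
  case (Cons \<mu> \<mu>s)
  then obtain fs where fs: "length fs = length \<mu>s" "set fs \<subseteq> Espace \<mu>s" "lin_indep fs"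
    by blast
  obtain h where h: "smooth h" "diffop \<mu>s h = (\<lambda>x. exp (\<mu> * of_real x))"
    using diffop_surj[OF smooth_exp_mult] by blast
  have "h \<in> Espace (\<mu> # \<mu>s)"
    using h diffop_exp_mult diffop_append[of "[\<mu>]" \<mu>s h] by (simp add: Espace_def del: diffop.simps)
  with fs(2) Espace_subset_Cons have "set (h # fs) \<subseteq> Espace (\<mu> # \<mu>s)"
    by auto
  moreover have "lin_indep (h # fs)"
    using h by (intro lin_indep_Cons[OF fs(3,2) h(1), of 0]) simp
  ultimately show ?case
    using fs(1) by (intro exI[of _ "h # fs"]) simp
qed

section \<open>Hermite interpolation and the Bernstein basis\<close>

lemma square_system_solvable:
  fixes M :: "nat \<Rightarrow> nat \<Rightarrow> 'a::field"
  assumes inj: "\<And>c. \<forall>i<n. (\<Sum>j<n. M i j * c j) = 0 \<Longrightarrow> \<forall>j<n. c j = 0"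
  shows "\<exists>c. \<forall>i<n. (\<Sum>j<n. M i j * c j) = y i"
proof -
  define A where "A = mat n n (\<lambda>(i, j). M i j)"
  have A: "A \<in> carrier_mat n n"
    by (simp add: A_def)
  have Av: "vec_index (A *\<^sub>v v) i = (\<Sum>j<n. M i j * vec_index v j)" if "i < n" "v \<in> carrier_vec n" for v i
    using that by (simp add: A_def mult_mat_vec_def scalar_prod_def atLeast0LessThan)
  have "Determinant.det A \<noteq> 0"
  proof
    assume "Determinant.det A = 0"
    then obtain v where v: "v \<in> carrier_vec n" "v \<noteq> 0\<^sub>v n" "A *\<^sub>v v = 0\<^sub>v n"
      using det_0_iff_vec_prod_zero_field[OF A] by auto
    then have "\<forall>j<n. vec_index v j = 0"
      using inj[of "\<lambda>j. vec_index v j"] Av by (metis index_zero_vec(1))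
    with v(1) have "v = 0\<^sub>v n"
      by (intro eq_vecI) auto
    with v(2) show False ..
  qed
  then obtain B where B: "B \<in> carrier_mat n n" "A * B = 1\<^sub>m n"
    using det_non_zero_imp_unit[OF A, of "()"] unfolding Units_def ring_mat_def by auto
  define x where "x = B *\<^sub>v vec n y"
  have x: "x \<in> carrier_vec n"
    using B by (simp add: x_def)
  have "A *\<^sub>v x = vec n y"
    using A B by (simp add: x_def assoc_mult_mat_vec[symmetric])
  then show ?thesis
    using Av[OF _ x] by (intro exI[of _ "\<lambda>j. vec_index x j"]) (metis index_vec)
qed

lemma lin_indep_interpolation:
  assumes fs: "lin_indep fs" "length fs = n"
    and L_lin: "\<And>i c. i < n \<Longrightarrow>
      L i (\<lambda>x. \<Sum>j<n. c j * (fs ! j) x) = (\<Sum>j<n. L i (fs ! j) * c j)"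
    and unisolvent: "\<And>c. \<forall>i<n. L i (\<lambda>x. \<Sum>j<n. c j * (fs ! j) x) = 0 \<Longrightarrow>
      (\<lambda>x. \<Sum>j<n. c j * (fs ! j) x) = (\<lambda>_. 0)"
  shows "\<exists>c. \<forall>i<n. L i (\<lambda>x. \<Sum>j<n. c j * (fs ! j) x) = y i"
proof -
  have "\<exists>c. \<forall>i<n. (\<Sum>j<n. L i (fs ! j) * c j) = y i"
  proof (rule square_system_solvable)
    fix c
    assume "\<forall>i<n. (\<Sum>j<n. L i (fs ! j) * c j) = 0"
    then have "(\<lambda>x. \<Sum>j<n. c j * (fs ! j) x) = (\<lambda>_. 0)"
      by (intro unisolvent) (simp add: L_lin)
    with fs show "\<forall>j<n. c j = 0"
      by (simp add: lin_indep_def fun_eq_iff)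
  qed
  then show ?thesis
    by (simp add: L_lin)
qed

lemma ECT_eq_zero:
  assumes "ECT \<mu>s {a, b}" "a \<noteq> b" "f \<in> Espace \<mu>s"
    and "\<forall>j<ka. nderiv j f a = 0" "\<forall>j<kb. nderiv j f b = 0" "length \<mu>s \<le> ka + kb"
  shows "f = (\<lambda>_. 0)"
proof (cases \<mu>s)
  case Nil
  with assms(3) show ?thesis
    by (simp add: Espace_def)
next
  case (Cons \<mu> \<mu>s')
  show ?thesis
  proof (rule ccontr)
    assume "f \<noteq> (\<lambda>_. 0)"
    with assms(1,3) have zeros: "at_most_zeros f {a, b} (length \<mu>s - 1)"
      by (simp add: ECT_def)
    define K where "K s = (if s = a then ka else kb)" for s
    have "\<forall>s\<in>{a, b}. \<forall>j<K s. nderiv j f s = 0"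
      using assms(2,4,5) by (simp add: K_def)
    with zeros[unfolded at_most_zeros_def, THEN spec[of _ "{a, b}"], THEN spec[of _ K]]
    have "(\<Sum>s\<in>{a, b}. K s) \<le> length \<mu>s - 1"
      by simp
    with assms(2,6) Cons show False
      by (simp add: K_def)
  qed
qed

lemma ECT_nderiv_nonzero:
  assumes "ECT \<mu>s {a, b}" "a \<noteq> b" "f \<in> Espace \<mu>s" "f \<noteq> (\<lambda>_. 0)"
    and "\<forall>j<ka. nderiv j f a = 0" "\<forall>j<kb. nderiv j f b = 0" "length \<mu>s = Suc (ka + kb)"
  shows "nderiv kb f b \<noteq> 0"
proof
  assume "nderiv kb f b = 0"
  with assms(6) have "\<forall>j<Suc kb. nderiv j f b = 0"
    by (simp add: less_Suc_eq)
  from ECT_eq_zero[OF assms(1-3,5) this] assms(4,7) show False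
    by simp
qed

definition hermite_datum :: "real \<Rightarrow> real \<Rightarrow> nat \<Rightarrow> nat \<Rightarrow> (real \<Rightarrow> complex) \<Rightarrow> complex" where
  "hermite_datum a b k i f = (if i \<le> k then nderiv i f a else nderiv (i - Suc k) f b)"

lemma hermite_data_surj:
  assumes ect: "ECT \<mu>s {a, b}" and ab: "a \<noteq> b" and k: "k < length \<mu>s"
  shows "\<exists>p\<in>Espace \<mu>s. \<forall>i<length \<mu>s. hermite_datum a b k i p = y i"
proof -
  define n where "n = length \<mu>s"
  obtain fs where fs: "length fs = n" "set fs \<subseteq> Espace \<mu>s" "lin_indep fs"
    using Espace_lin_indep_list n_def by blast
  have fs_E: "\<forall>j\<in>{..<n}. fs ! j \<in> Espace \<mu>s"
    using fs(1,2) nth_mem by auto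
  define comb where "comb c x = (\<Sum>j<n. c j * (fs ! j) x)" for c x
  have comb_E: "comb c \<in> Espace \<mu>s" for c
    unfolding comb_def[abs_def] using fs_E by (rule Espace_sum)
  have "\<exists>c. \<forall>i<n. hermite_datum a b k i (comb c) = y i"
    unfolding comb_def[abs_def]
  proof (rule lin_indep_interpolation[OF fs(3,1)])
    have "\<forall>j\<in>{..<n}. smooth (fs ! j)"
      using fs_E by (simp add: Espace_def)
    from nderiv_sum[OF this]
    show "hermite_datum a b k i (\<lambda>x. \<Sum>j<n. c j * (fs ! j) x)
        = (\<Sum>j<n. hermite_datum a b k i (fs ! j) * c j)" for i c
      by (simp add: hermite_datum_def, simp add: mult.commute)
  next
    fix c
    assume "\<forall>i<n. hermite_datum a b k i (\<lambda>x. \<Sum>j<n. c j * (fs ! j) x) = 0"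
    then have L0: "hermite_datum a b k i (comb c) = 0" if "i < n" for i
      using that by (simp add: comb_def[abs_def])
    have "comb c = (\<lambda>_. 0)"
    proof (rule ECT_eq_zero[OF ect ab comb_E])
      have "nderiv j (comb c) a = 0" if "j < Suc k" for j
        using L0[of j] that k by (simp add: hermite_datum_def n_def)
      then show "\<forall>j<Suc k. nderiv j (comb c) a = 0"
        by blast
      show "\<forall>j<n - Suc k. nderiv j (comb c) b = 0"
        using L0[of "_ + Suc k"] by (auto simp: hermite_datum_def)
    qed (use k n_def in simp)
    then show "(\<lambda>x. \<Sum>j<n. c j * (fs ! j) x) = (\<lambda>_. 0)"
      by (simp add: comb_def[abs_def])
  qed
  then obtain c where "\<forall>i<n. hermite_datum a b k i (comb c) = y i" ..
  with comb_E show ?thesis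
    unfolding n_def by blast
qed

lemma hermite_interpolant_exists:
  assumes "ECT \<mu>s {a, b}" "a \<noteq> b" "k < length \<mu>s"
  shows "\<exists>p\<in>Espace \<mu>s. (\<forall>j<k. nderiv j p a = 0) \<and> nderiv k p a = 1
           \<and> (\<forall>j<length \<mu>s - 1 - k. nderiv j p b = 0)"
proof -
  obtain p where p: "p \<in> Espace \<mu>s"
    "\<And>i. i < length \<mu>s \<Longrightarrow> hermite_datum a b k i p = (if i = k then 1 else 0)"
    using hermite_data_surj[OF assms, where y = "\<lambda>i. if i = k then 1 else 0"] by blast
  show ?thesis
  proof (intro bexI conjI allI impI)
    show "nderiv j p a = 0" if "j < k" for j
      using p(2)[of j] that assms(3) by (simp add: hermite_datum_def)
    show "nderiv k p a = 1"
      using p(2)[of k] assms(3) by (simp add: hermite_datum_def)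
    show "nderiv j p b = 0" if "j < length \<mu>s - 1 - k" for j
      using p(2)[of "j + Suc k"] that by (simp add: hermite_datum_def)
  qed (rule p(1))
qed

lemma bernstein_conditions_exact:
  assumes ect: "ECT \<mu>s {a, b}" and ab: "a \<noteq> b" and k: "k < length \<mu>s"
    and p: "p \<in> Espace \<mu>s" "\<forall>j<k. nderiv j p a = 0" "nderiv k p a = 1"
      "\<forall>j<length \<mu>s - 1 - k. nderiv j p b = 0"
  shows "zero_of_order p a k" "zero_of_order p b (length \<mu>s - 1 - k)"
proof -
  have "p \<noteq> (\<lambda>_. 0)"
    using p(3) by (auto simp: nderiv_zero)
  with ECT_nderiv_nonzero[OF ect ab p(1) _ p(2,4)] k
  show "zero_of_order p a k" "zero_of_order p b (length \<mu>s - 1 - k)"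
    using p(2-4) by (auto simp: zero_of_order_def)
qed

lemma bernstein_eqI:
  assumes ect: "ECT \<mu>s {a, b}" and ab: "a \<noteq> b" and k: "k < length \<mu>s"
    and p: "p \<in> Espace \<mu>s" "\<forall>j<k. nderiv j p a = 0" "nderiv k p a = 1"
      "\<forall>j<length \<mu>s - 1 - k. nderiv j p b = 0"
  shows "bernstein \<mu>s a b k = p"
  unfolding bernstein_def
proof (rule the_equality)
  show "p \<in> Espace \<mu>s \<and> zero_of_order p a k \<and> zero_of_order p b (length \<mu>s - 1 - k)
          \<and> nderiv k p a = 1"
    using bernstein_conditions_exact[OF assms] p by blast
  fix q
  assume q: "q \<in> Espace \<mu>s \<and> zero_of_order q a k \<and> zero_of_order q b (length \<mu>s - 1 - k)
               \<and> nderiv k q a = 1"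
  have sm: "smooth q" "smooth p"
    using p q by (auto simp: Espace_def)
  have "(\<lambda>x. q x - p x) = (\<lambda>_. 0)"
  proof (rule ECT_eq_zero[OF ect ab Espace_diff])
    show "\<forall>j<Suc k. nderiv j (\<lambda>x. q x - p x) a = 0"
      using p q by (auto simp: nderiv_diff[OF sm] zero_of_order_def less_Suc_eq)
    show "\<forall>j<length \<mu>s - 1 - k. nderiv j (\<lambda>x. q x - p x) b = 0"
      using p q by (auto simp: nderiv_diff[OF sm] zero_of_order_def)
  qed (use p q k in auto)
  then show "q = p"
    by (simp add: fun_eq_iff)
qed

lemma bernstein_spec:
  assumes "ECT \<mu>s {a, b}" "a \<noteq> b" "k < length \<mu>s"
  shows "bernstein \<mu>s a b k \<in> Espace \<mu>s" "zero_of_order (bernstein \<mu>s a b k) a k"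
    "zero_of_order (bernstein \<mu>s a b k) b (length \<mu>s - 1 - k)"
    "nderiv k (bernstein \<mu>s a b k) a = 1"
proof -
  obtain p where p: "p \<in> Espace \<mu>s" "\<forall>j<k. nderiv j p a = 0" "nderiv k p a = 1"
      "\<forall>j<length \<mu>s - 1 - k. nderiv j p b = 0"
    using hermite_interpolant_exists[OF assms] by blast
  moreover have "bernstein \<mu>s a b k = p"
    by (rule bernstein_eqI[OF assms p])
  ultimately show "bernstein \<mu>s a b k \<in> Espace \<mu>s" "zero_of_order (bernstein \<mu>s a b k) a k"
    "zero_of_order (bernstein \<mu>s a b k) b (length \<mu>s - 1 - k)"
    "nderiv k (bernstein \<mu>s a b k) a = 1"
    using bernstein_conditions_exact[OF assms p] by simp_all
qed

section \<open>Quotients of functions with a common zero\<close>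

lemma tendsto_at_by_nearer_point:
  fixes g G :: "real \<Rightarrow> 'a::metric_space"
  assumes "\<And>x. x \<noteq> b \<Longrightarrow> \<exists>s. \<bar>s - b\<bar> \<le> \<bar>x - b\<bar> \<and> g x = G s" and "isCont G b"
  shows "(g \<longlongrightarrow> G b) (at b)"
proof (rule tendstoI)
  fix e :: real
  assume "e > 0"
  with assms(2) obtain d where d: "d > 0" "\<And>s. dist s b < d \<Longrightarrow> dist (G s) (G b) < e"
    unfolding continuous_at_eps_delta by blast
  have "dist (g x) (G b) < e" if "x \<noteq> b" "dist x b < d" for x
    using assms(1)[OF that(1)] d(2) that(2) by (force simp: dist_real_def)
  with d(1) show "eventually (\<lambda>x. dist (g x) (G b) < e) (at b)"
    unfolding eventually_at by blast
qed

lemma tendsto_div_power_real: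
  fixes F :: "nat \<Rightarrow> real \<Rightarrow> real"
  assumes D: "\<And>m x. DERIV (F m) x :> F (Suc m) x" and z: "\<forall>j<r. F j b = 0"
  shows "((\<lambda>x. F 0 x / (x - b) ^ r) \<longlongrightarrow> F r b / fact r) (at b)"
proof (rule tendsto_at_by_nearer_point[where G = "\<lambda>s. F r s / fact r"])
  show "isCont (\<lambda>s. F r s / fact r) b"
    using DERIV_isCont[OF D[of r b]] by (intro continuous_intros) auto
  fix x assume x: "x \<noteq> b"
  show "\<exists>s. \<bar>s - b\<bar> \<le> \<bar>x - b\<bar> \<and> F 0 x / (x - b) ^ r = F r s / fact r"
  proof (cases "r = 0")
    case False
    have "\<forall>m y. ((\<lambda>y. F m (y + b)) has_real_derivative F (Suc m) (y + b)) (at y)"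
      using D DERIV_shift by blast
    from Maclaurin_all_lt[where diff = "\<lambda>m y. F m (y + b)" and n = r and x = "x - b",
        OF refl _ _ this] False x
    obtain t where t: "\<bar>t\<bar> < \<bar>x - b\<bar>"
        "F 0 x = (\<Sum>m<r. F m b / fact m * (x - b) ^ m) + F r (t + b) / fact r * (x - b) ^ r"
      by auto
    have "(\<Sum>m<r. F m b / fact m * (x - b) ^ m) = 0"
      using z by simp
    with t(2) x have "F 0 x / (x - b) ^ r = F r (t + b) / fact r"
      by simp
    with t(1) show ?thesis
      by (intro exI[of _ "t + b"]) simp
  qed (intro exI[of _ x], simp)
qed

lemma tendsto_div_power:
  assumes f: "smooth f" and z: "\<forall>j<r. nderiv j f b = 0"
  shows "((\<lambda>x. f x / of_real ((x - b) ^ r)) \<longlongrightarrow> nderiv r f b / of_real (fact r)) (at b)"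
proof -
  have "((\<lambda>x. P (f x) / (x - b) ^ r) \<longlongrightarrow> P (nderiv r f b) / fact r) (at b)"
    if P: "bounded_linear P" for P :: "complex \<Rightarrow> real"
  proof -
    have "((\<lambda>x. P (nderiv 0 f x) / (x - b) ^ r) \<longlongrightarrow> P (nderiv r f b) / fact r) (at b)"
    proof (rule tendsto_div_power_real[where F = "\<lambda>m x. P (nderiv m f x)"])
      show "((\<lambda>x. P (nderiv m f x)) has_real_derivative P (nderiv (Suc m) f x)) (at x)" for m x
        unfolding has_real_derivative_iff_has_vector_derivative
        by (rule bounded_linear.has_vector_derivative[OF P smooth_has_vector_derivative[OF f]])
      show "\<forall>j<r. P (nderiv j f b) = 0"
        using z linear_0[OF bounded_linear.linear[OF P]] by simp
    qed
    then show ?thesis by simp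
  qed
  from this[OF bounded_linear_Re] this[OF bounded_linear_Im] show ?thesis
    by (simp add: tendsto_complex_iff del: of_real_fact)
qed

lemma tendsto_divide_at_common_zero:
  assumes "smooth f" "smooth g" "\<forall>j<r. nderiv j f b = 0" "\<forall>j<r. nderiv j g b = 0"
    and "nderiv r g b \<noteq> 0"
  shows "((\<lambda>x. f x / g x) \<longlongrightarrow> nderiv r f b / nderiv r g b) (at b)"
proof -
  have cancel: "(u / c) / (v / c) = u / v" if "c \<noteq> 0" for u v c :: complex
    using that by (cases "v = 0") (simp_all add: field_simps)
  have "((\<lambda>x. (f x / of_real ((x - b) ^ r)) / (g x / of_real ((x - b) ^ r)))
          \<longlongrightarrow> (nderiv r f b / of_real (fact r)) / (nderiv r g b / of_real (fact r))) (at b)"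
    using assms by (intro tendsto_divide tendsto_div_power) auto
  then have lim: "((\<lambda>x. (f x / of_real ((x - b) ^ r)) / (g x / of_real ((x - b) ^ r)))
          \<longlongrightarrow> nderiv r f b / nderiv r g b) (at b)"
    by (simp only: cancel of_real_eq_0_iff fact_nonzero not_False_eq_True)
  have "eventually (\<lambda>x. (f x / of_real ((x - b) ^ r)) / (g x / of_real ((x - b) ^ r))
          = f x / g x) (at b)"
    unfolding eventually_at_filter by (intro always_eventually allI impI cancel) simp
  with lim show ?thesis
    by (rule Lim_transform_eventually)
qed

section \<open>Differences of Bernstein functions\<close>

lemma bernstein_difference:
  assumes "l0 \<noteq> l1" "a \<noteq> b" "ECT (l0 # ls) {a, b}" "ECT (l1 # ls) {a, b}" "ECT ls {a, b}"
    and "k \<le> length ls"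
  defines "d \<equiv> \<lambda>x. bernstein (l0 # ls) a b k x - bernstein (l1 # ls) a b k x"
  shows "d \<in> Espace (l0 # l1 # ls)" "d \<noteq> (\<lambda>_. 0)"
    "\<forall>j<Suc k. nderiv j d a = 0" "\<forall>j<length ls - k. nderiv j d b = 0"
proof -
  let ?p0 = "bernstein (l0 # ls) a b k" and ?p1 = "bernstein (l1 # ls) a b k"
  have "k < length (l0 # ls)" "k < length (l1 # ls)"
    using assms(6) by simp_all
  note P0 = bernstein_spec[OF assms(3,2) this(1), unfolded zero_of_order_def]
    and P1 = bernstein_spec[OF assms(4,2) this(2), unfolded zero_of_order_def]
  have sm: "smooth ?p0" "smooth ?p1"
    using P0(1) P1(1) by (auto simp: Espace_def)
  have "?p0 \<in> Espace (l0 # l1 # ls)" "?p1 \<in> Espace (l0 # l1 # ls)"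
    using P0(1) P1(1) Espace_subset_Cons Espace_swap by blast+
  then show "d \<in> Espace (l0 # l1 # ls)"
    unfolding d_def by (rule Espace_diff)
  show "\<forall>j<Suc k. nderiv j d a = 0"
    using P0(2,4) P1(2,4) by (auto simp: d_def nderiv_diff[OF sm] less_Suc_eq)
  show "\<forall>j<length ls - k. nderiv j d b = 0"
    using P0(3) P1(3) by (simp add: d_def nderiv_diff[OF sm])
  show "d \<noteq> (\<lambda>_. 0)"
  proof
    assume "d = (\<lambda>_. 0)"
    then have "?p0 = ?p1"
      by (simp add: d_def fun_eq_iff)
    with P0(1) P1(1) Espace_Cons_Int[OF assms(1)] have "?p0 \<in> Espace ls"
      by auto
    with P0(2,3) assms(6) have "?p0 = (\<lambda>_. 0)"
      by (intro ECT_eq_zero[OF assms(5,2), of _ k "length ls - k"]) auto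
    with P0(4) show False
      by (simp add: nderiv_zero)
  qed
qed

lemma bernstein_difference_eq:
  assumes "l0 \<noteq> l1" "a \<noteq> b" "ECT (l0 # l1 # ls) {a, b}" "ECT (l0 # ls) {a, b}"
    "ECT (l1 # ls) {a, b}" "ECT ls {a, b}" "k \<le> length ls"
  shows "\<exists>C. C \<noteq> 0 \<and> (\<lambda>x. bernstein (l0 # ls) a b k x - bernstein (l1 # ls) a b k x)
           = (\<lambda>x. C * bernstein (l0 # l1 # ls) a b (Suc k) x)"
proof -
  define d where "d = (\<lambda>x. bernstein (l0 # ls) a b k x - bernstein (l1 # ls) a b k x)"
  note D = bernstein_difference[OF assms(1,2,4-7), folded d_def]
  have sm: "smooth d"
    using D(1) by (simp add: Espace_def)
  define C where "C = nderiv (Suc k) d a"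
  have "C \<noteq> 0"
    unfolding C_def using assms(2,3,7) D
    by (intro ECT_nderiv_nonzero[of _ b a, where kb = "Suc k" and ka = "length ls - k"])
      (auto simp: insert_commute)
  have "bernstein (l0 # l1 # ls) a b (Suc k) = (\<lambda>x. inverse C * d x)"
  proof (rule bernstein_eqI[OF assms(3,2)])
    show "(\<lambda>x. inverse C * d x) \<in> Espace (l0 # l1 # ls)"
      using D(1) by (rule Espace_cmult)
    show "nderiv (Suc k) (\<lambda>x. inverse C * d x) a = 1"
      using \<open>C \<noteq> 0\<close> by (simp add: nderiv_cmult[OF sm] C_def)
  qed (use assms(7) D(3,4) in \<open>auto simp: nderiv_cmult[OF sm]\<close>)
  with \<open>C \<noteq> 0\<close> show ?thesis
    by (intro exI[of _ C]) (simp add: d_def fun_eq_iff)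
qed

lemma bernstein_ratio_limit:
  assumes "l0 \<noteq> l1" "a \<noteq> b" "ECT (l0 # l1 # ls) {a, b}" "ECT (l0 # ls) {a, b}"
    "ECT (l1 # ls) {a, b}" "ECT ls {a, b}" "k \<le> length ls"
  shows "\<exists>L. ((\<lambda>x. bernstein (l0 # ls) a b k x / bernstein (l1 # ls) a b k x) \<longlongrightarrow> L) (at b)
           \<and> L \<noteq> 1"
proof -
  let ?p0 = "bernstein (l0 # ls) a b k" and ?p1 = "bernstein (l1 # ls) a b k"
  define r where "r = length ls - k"
  have "k < length (l0 # ls)" "k < length (l1 # ls)"
    using assms(7) by simp_all
  note P0 = bernstein_spec[OF assms(4,2) this(1), unfolded zero_of_order_def]
    and P1 = bernstein_spec[OF assms(5,2) this(2), unfolded zero_of_order_def]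
  have sm: "smooth ?p0" "smooth ?p1"
    using P0(1) P1(1) by (auto simp: Espace_def)
  note D = bernstein_difference[OF assms(1,2,4-7)]
  have "nderiv r (\<lambda>x. ?p0 x - ?p1 x) b \<noteq> 0"
    unfolding r_def using assms(7) by (intro ECT_nderiv_nonzero[OF assms(3,2) D]) simp
  then have "nderiv r ?p0 b / nderiv r ?p1 b \<noteq> 1"
    by (simp add: nderiv_diff[OF sm])
  moreover have "((\<lambda>x. ?p0 x / ?p1 x) \<longlongrightarrow> nderiv r ?p0 b / nderiv r ?p1 b) (at b)"
    using P0(3) P1(3) by (intro tendsto_divide_at_common_zero[OF sm]) (simp_all add: r_def)
  ultimately show ?thesis
    by blast
qed

theorem mainTheorem11:
  fixes l0 l1 :: complex and ls :: "complex list" and a b :: real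
  assumes "l0 \<noteq> l1" and "a \<noteq> b"
    and "ECT (l0 # l1 # ls) {a, b}"
    and "ECT (l0 # ls) {a, b}"
    and "ECT (l1 # ls) {a, b}"
    and "ECT ls {a, b}"
  shows "\<forall>k \<le> length ls.
     (\<exists>C :: complex. C \<noteq> 0 \<and>
        (\<lambda>x. bernstein (l0 # ls) a b k x - bernstein (l1 # ls) a b k x)
          = (\<lambda>x. C * bernstein (l0 # l1 # ls) a b (Suc k) x))
     \<and> (\<exists>L. ((\<lambda>x. bernstein (l0 # ls) a b k x / bernstein (l1 # ls) a b k x)
              \<longlongrightarrow> L) (at b) \<and> L \<noteq> 1)"
  using bernstein_difference_eq[OF assms] bernstein_ratio_limit[OF assms] by blast

end
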